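(* Let $S$ be a commutative ring, fix $q\in S$, and put $[2]=1+q$. Let $X,Y\in\mathbb{M}_2(S)$ have determinants $\delta,\delta'$, traces $t,t'$, and $q$-traces $\tau=\operatorname{tr}_q(X)$, $\tau'=\operatorname{tr}_q(Y)$, and let $\sigma=\operatorname{tr}_q(XY)$, $\sigma'=\operatorname{tr}_q(YX)$. Then $$q\cdot\det\,[X,Y]=[2]^2\,\delta'\delta-[2]\,\big(\delta\,t'\tau'+\delta'\,t\,\tau\big)+\big(\delta\,\tau'^2+\delta'\tau^2+\operatorname{tr}(XY)\,\tau'\tau-\sigma'\sigma\big).$$
   Context: $[X,Y]=XY-YX$. For $M=(m_{ij})\in\mathbb{M}_2(S)$ and $q\in S$, the $q$-trace is $\operatorname{tr}_q(M)=m_{11}+q\,m_{22}$. *)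

theory Defs
  imports "HOL-Analysis.Analysis"
begin

definition commutator :: "'a::comm_ring_1^'n^'n \<Rightarrow> 'a^'n^'n \<Rightarrow> 'a^'n^'n" where
  "commutator X Y = X ** Y - Y ** X"

definition qtrace :: "'a::comm_ring_1 \<Rightarrow> 'a^2^2 \<Rightarrow> 'a" where
  "qtrace q M = M $ 1 $ 1 + q * M $ 2 $ 2"

end

theory Submission
  imports Defs
begin

(* The identity is a polynomial identity in the eight entries of X and Y, so the proof
   reduces it to coordinates.  Next, the commutator [X,Y] is traceless, and a traceless
   2x2 matrix C has det C = -(C11^2 + C12*C21); this gives det [X,Y] directly in terms
   of the entries of XY - YX. *)

lemma matrix_mult_2_entry:
  fixes A B :: "'a::comm_ring_1^2^2"
  shows "(A ** B) $ i $ j = A $ i $ 1 * B $ 1 $ j + A $ i $ 2 * B $ 2 $ j"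
  by (simp add: matrix_matrix_mult_def sum_2)

lemma trace_2:
  fixes M :: "'a::comm_ring_1^2^2"
  shows "trace M = M $ 1 $ 1 + M $ 2 $ 2"
  by (simp add: trace_def sum_2)

lemma trace_commutator:
  fixes X Y :: "'a::comm_ring_1^'n^'n"
  shows "trace (commutator X Y) = 0"
  unfolding commutator_def trace_sub trace_mul_sym[of X Y] by simp

lemma det_traceless_2:
  fixes C :: "'a::comm_ring_1^2^2"
  assumes "trace C = 0"
  shows "det C = - ((C $ 1 $ 1)^2 + C $ 1 $ 2 * C $ 2 $ 1)"
proof -
  have "C $ 2 $ 2 = - C $ 1 $ 1"
    using assms unfolding trace_2 add_eq_0_iff .
  then show ?thesis
    by (simp add: det_2 power2_eq_square)
qed

text \<open>The theorem written out in the entries X = [[a,b],[c,d]], Y = [[e,f],[g,h]]: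
  the left side uses det [X,Y] = -(k11^2 + k12 k21) with k = XY - YX.\<close>
lemma q_det_commutator_coords:
  fixes q a b c d e f g h :: "'a::comm_ring_1"
  defines "k11 \<equiv> (a * e + b * g) - (e * a + f * c)"
    and "k12 \<equiv> (a * f + b * h) - (e * b + f * d)"
    and "k21 \<equiv> (c * e + d * g) - (g * a + h * c)"
  shows "q * - (k11^2 + k12 * k21) =
     (1 + q)^2 * (e * h - f * g) * (a * d - b * c)
     - (1 + q) * ((a * d - b * c) * (e + h) * (e + q * h)
                  + (e * h - f * g) * (a + d) * (a + q * d))
     + ((a * d - b * c) * (e + q * h)^2 + (e * h - f * g) * (a + q * d)^2
        + ((a * e + b * g) + (c * f + d * h)) * (e + q * h) * (a + q * d)
        - ((e * a + f * c) + q * (g * b + h * d)) * ((a * e + b * g) + q * (c * f + d * h)))"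
  unfolding k11_def k12_def k21_def
  by (simp add: power2_eq_square algebra_simps)

theorem theorem4p1:
  fixes q :: "'a::comm_ring_1" and X Y :: "'a^2^2"
  shows "q * det (commutator X Y) =
     (1 + q)^2 * det Y * det X
     - (1 + q) * (det X * trace Y * qtrace q Y + det Y * trace X * qtrace q X)
     + (det X * (qtrace q Y)^2 + det Y * (qtrace q X)^2
        + trace (X ** Y) * qtrace q Y * qtrace q X
        - qtrace q (Y ** X) * qtrace q (X ** Y))"
proof -
  let ?C = "commutator X Y"
  have det_comm: "det ?C = - ((?C $ 1 $ 1)^2 + ?C $ 1 $ 2 * ?C $ 2 $ 1)"
    by (rule det_traceless_2[OF trace_commutator])
  have comm_entry: "?C $ i $ j = (X ** Y) $ i $ j - (Y ** X) $ i $ j" for i j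
    by (simp add: commutator_def)
  show ?thesis
    unfolding det_comm
    unfolding comm_entry matrix_mult_2_entry qtrace_def trace_2 det_2
    by (rule q_det_commutator_coords)
qed

end
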